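(* As formal power series in $q$, coefficientwise, $$\sum_{n=1}^{\infty} \overline{p}_{\omega}(n)q^n \equiv -1 +\sum_{m,n=0}^{\infty} (-1)^{m+n} q^{2(m^2+n^2)} + q \sum_{m,n=0}^{\infty} q^{2m(m+1)+2n(n+1)} \pmod{4}.$$
   Context: An overpartition of $n$ is a partition of $n$ in which the first occurrence of each distinct part may be overlined. $\overline{p}_{\omega}(n)$ denotes the number of overpartitions of $n$ in which the smallest part is overlined and all odd parts are less than twice the smallest part; equivalently $\sum_{n\ge1}\overline{p}_{\omega}(n)q^n=\sum_{n\ge1}\frac{q^n(-q^{n+1};q)_n(-q^{2n+2};q^2)_{\infty}}{(1-q^n)(q^{n+1};q)_n(q^{2n+2};q^2)_{\infty}}$, where $(a;q)_n=\prod_{j=0}^{n-1}(1-aq^j)$, $(a;q)_\infty=\prod_{j\ge0}(1-aq^j)$. *)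

theory Defs
  imports Main "HOL-Library.Multiset"
begin

text \<open>An overpartition of n is encoded as a pair (M, Ov): M is the multiset of parts
  (positive naturals summing to n) and Ov is the set of distinct part sizes whose
  first occurrence is overlined (so Ov is a subset of the set of parts).\<close>

definition overpartitions :: "nat \<Rightarrow> (nat multiset \<times> nat set) set" where
  "overpartitions n = {(M, Ov). (\<forall>k \<in># M. 0 < k) \<and> sum_mset M = n \<and> Ov \<subseteq> set_mset M}"

definition pbar_omega :: "nat \<Rightarrow> nat" where
  "pbar_omega n = card {(M, Ov) \<in> overpartitions n.
       M \<noteq> {#} \<and> Min (set_mset M) \<in> Ov \<and>
       (\<forall>k \<in># M. odd k \<longrightarrow> k < 2 * Min (set_mset M))}"

text \<open>Coefficient of q^N in
  -1 + sum_{m,n>=0} (-1)^(m+n) q^(2(m^2+n^2)) + q sum_{m,n>=0} q^(2m(m+1)+2n(n+1)).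
  Only m, n \<le> N can contribute.\<close>

definition rhs_coeff :: "nat \<Rightarrow> int" where
  "rhs_coeff N =
     (if N = 0 then -1 else 0)
     + (\<Sum>(m, n) \<in> {(m, n). m \<le> N \<and> n \<le> N \<and> 2 * (m^2 + n^2) = N}. (-1::int) ^ (m + n))
     + int (card {(m, n). m \<le> N \<and> n \<le> N \<and> 1 + 2 * m * (m + 1) + 2 * n * (n + 1) = N})"

end

theory Submission
  imports Defs
begin

text \<open>
  An overpartition counted by \<open>pbar_omega N\<close> whose underlying partition has \<open>k\<close> distinct parts
  arises from \<open>2^(k-1)\<close> choices of overlining, since only the smallest part is forced; modulo 4
  only partitions with one or two distinct parts survive. Those with one part are counted by the
  divisor pairs of \<open>N\<close>, those with two parts by quadruples \<open>(p, q, r, s)\<close> of positive integers with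
  \<open>p r + q s = N\<close> under order and parity conditions. The parity of these quadruple counts follows
  from involutions, chiefly \<open>(p, q, r, s) \<mapsto> (r, s, p, q)\<close> and
  \<open>(p, q, r, s) \<mapsto> (s, r + s, q - p, p)\<close>, whose fixed points are sums of two squares and divisor
  pairs. Both sides of the congruence thereby reduce to
  \<open>[N = t\<^sup>2] + 2 (#{0 < p < q. p\<^sup>2 + q\<^sup>2 = N} + [N = 2 t\<^sup>2])\<close> modulo 4.
\<close>

lemma even_card_iff_even_card_fixpoints:
  assumes "finite S" and "f ` S \<subseteq> S" and "\<And>x. x \<in> S \<Longrightarrow> f (f x) = x"
  shows "even (card S) \<longleftrightarrow> even (card {x \<in> S. f x = x})"
  using assms
proof (induction "card S" arbitrary: S rule: less_induct)
  case less
  show ?case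
  proof (cases "\<exists>x\<in>S. f x \<noteq> x")
    case False
    then have "{x \<in> S. f x = x} = S" by auto
    then show ?thesis by simp
  next
    case True
    then obtain x where x: "x \<in> S" "f x \<noteq> x" by auto
    define S' where "S' = S - {x, f x}"
    have fx: "f x \<in> S" using less.prems x by auto
    have sub: "{x, f x} \<subseteq> S" using x fx by auto
    have card_S: "card S = card S' + 2"
      using card_Diff_subset[OF _ sub] card_mono[OF less.prems(1) sub] x(2)
      by (simp add: S'_def)
    have "f ` S' \<subseteq> S'"
      using less.prems x unfolding S'_def by auto (metis)+
    then have "even (card S') \<longleftrightarrow> even (card {y \<in> S'. f y = y})"
      using less.hyps[of S'] less.prems card_S by (simp add: S'_def)
    moreover have "{y \<in> S'. f y = y} = {y \<in> S. f y = y}"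
      using x less.prems by (auto simp: S'_def)
    ultimately show ?thesis using card_S by simp
  qed
qed

lemma sum_swap_symmetric:
  fixes A :: "('a::linorder \<times> 'a) set" and F :: "'a \<times> 'a \<Rightarrow> 'b::comm_semiring_1"
  assumes "finite A" and "\<And>m n. (m, n) \<in> A \<Longrightarrow> (n, m) \<in> A" and "\<And>m n. F (m, n) = F (n, m)"
  shows "sum F A = 2 * sum F {(m, n) \<in> A. m < n} + sum F {(m, n) \<in> A. m = n}"
proof -
  let ?L = "{(m, n) \<in> A. m < n}" and ?G = "{(m, n) \<in> A. n < m}" and ?E = "{(m, n) \<in> A. m = n}"
  have "A = (?L \<union> ?G) \<union> ?E" by auto
  also have "sum F \<dots> = sum F (?L \<union> ?G) + sum F ?E"
    using assms(1) by (intro sum.union_disjoint) (auto intro: rev_finite_subset)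
  also have "sum F (?L \<union> ?G) = sum F ?L + sum F ?G"
    using assms(1) by (intro sum.union_disjoint) (auto intro: rev_finite_subset)
  finally have "sum F A = sum F ?L + sum F ?G + sum F ?E" .
  moreover have "sum F ?G = sum F ?L"
  proof -
    have "?G = prod.swap ` ?L" using assms(2) by (auto simp: image_iff)
    then have "sum F ?G = sum (F \<circ> prod.swap) ?L" by (simp add: sum.reindex)
    also have "\<dots> = sum F ?L" using assms(3) by (intro sum.cong) auto
    finally show ?thesis .
  qed
  ultimately show ?thesis by (simp add: mult_2)
qed

lemma card_eq_by_inverse:
  assumes "f ` A \<subseteq> B" and "g ` B \<subseteq> A"
    and "\<And>x. x \<in> A \<Longrightarrow> g (f x) = x" and "\<And>y. y \<in> B \<Longrightarrow> f (g y) = y"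
  shows "card A = card B"
  using assms by (intro bij_betw_same_card bij_betw_byWitness[where f' = g]) auto

lemma card_pairs_eq_by_inverse:
  assumes "\<And>a b. (a, b) \<in> A \<Longrightarrow> f (a, b) \<in> B \<and> g (f (a, b)) = (a, b)"
    and "\<And>c d. (c, d) \<in> B \<Longrightarrow> g (c, d) \<in> A \<and> f (g (c, d)) = (c, d)"
  shows "card A = card B"
  by (rule card_eq_by_inverse[where f = f and g = g]) (use assms in auto)

lemma sum_power2_mod4:
  assumes "finite A"
  shows "(\<Sum>x\<in>A. (2::nat) ^ e x) mod 4 = (card {x \<in> A. e x = 0} + 2 * card {x \<in> A. e x = 1}) mod 4"
proof -
  let ?Zero = "{x \<in> A. e x = 0}" and ?One = "{x \<in> A. e x = 1}" and ?Many = "{x \<in> A. 2 \<le> e x}"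
  have "A = (?Zero \<union> ?One) \<union> ?Many" by auto
  also have "(\<Sum>x\<in>\<dots>. (2::nat) ^ e x) = (\<Sum>x\<in>?Zero \<union> ?One. 2 ^ e x) + (\<Sum>x\<in>?Many. 2 ^ e x)"
    using assms by (intro sum.union_disjoint) auto
  also have "(\<Sum>x\<in>?Zero \<union> ?One. (2::nat) ^ e x) = (\<Sum>x\<in>?Zero. 2 ^ e x) + (\<Sum>x\<in>?One. 2 ^ e x)"
    using assms by (intro sum.union_disjoint) auto
  also have "(\<Sum>x\<in>?Zero. (2::nat) ^ e x) + (\<Sum>x\<in>?One. 2 ^ e x) = card ?Zero + 2 * card ?One"
    by simp
  finally have split: "(\<Sum>x\<in>A. (2::nat) ^ e x) = card ?Zero + 2 * card ?One + (\<Sum>x\<in>?Many. 2 ^ e x)" .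
  have "4 dvd (\<Sum>x\<in>?Many. (2::nat) ^ e x)"
  proof (rule dvd_sum)
    fix x assume "x \<in> ?Many"
    then show "4 dvd (2::nat) ^ e x" using le_imp_power_dvd[of 2 "e x" "2::nat"] by simp
  qed
  then obtain k where "(\<Sum>x\<in>?Many. (2::nat) ^ e x) = 4 * k" ..
  then show ?thesis unfolding split by simp
qed

section \<open>Divisor pairs\<close>

definition is_scaled_square :: "nat \<Rightarrow> nat \<Rightarrow> bool" where
  "is_scaled_square c N \<longleftrightarrow> (\<exists>t. c * t\<^sup>2 = N)"

definition divisor_pairs :: "nat \<Rightarrow> nat \<Rightarrow> (nat \<times> nat) set" where
  "divisor_pairs c N = {(d, e). c * d * e = N}"

lemma card_diagonal_divisor_pairs:
  assumes "0 < c"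
  shows "card {(d, e) \<in> divisor_pairs c N. d = e} = of_bool (is_scaled_square c N)"
proof (cases "is_scaled_square c N")
  case True
  then obtain t where t: "c * t\<^sup>2 = N" by (auto simp: is_scaled_square_def)
  have "c * d * d = N \<longleftrightarrow> d = t" for d
  proof
    assume "c * d * d = N"
    then have "c * d\<^sup>2 = c * t\<^sup>2" using t by (simp add: power2_eq_square mult.assoc)
    then have "d\<^sup>2 = t\<^sup>2" using assms by simp
    then show "d = t" by (simp add: power_eq_iff_eq_base)
  qed (use t in \<open>simp add: power2_eq_square mult.assoc\<close>)
  then have "{(d, e) \<in> divisor_pairs c N. d = e} = {(t, t)}" by (auto simp: divisor_pairs_def)
  then show ?thesis using True by simp
next
  case False
  then have empty: "{(d, e) \<in> divisor_pairs c N. d = e} = {}"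
    by (auto simp: divisor_pairs_def is_scaled_square_def power2_eq_square mult.assoc)
  show ?thesis unfolding empty using False by simp
qed

lemma finite_divisor_pairs:
  assumes "0 < N"
  shows "finite (divisor_pairs c N)"
proof (rule finite_subset)
  show "divisor_pairs c N \<subseteq> {..N} \<times> {..N}"
    using assms by (auto simp: divisor_pairs_def intro!: dvd_imp_le)
qed simp

lemma card_divisor_pairs:
  assumes "0 < N" and "0 < c"
  shows "card (divisor_pairs c N) =
         2 * card {(d, e) \<in> divisor_pairs c N. d < e} + of_bool (is_scaled_square c N)"
  using sum_swap_symmetric[OF finite_divisor_pairs[OF assms(1), of c], where F = "\<lambda>_. 1::nat"]
    card_diagonal_divisor_pairs[OF assms(2)]
  by (simp add: divisor_pairs_def mult_ac)

corollary odd_card_divisor_pairs_iff: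
  assumes "0 < N" and "0 < c"
  shows "odd (card (divisor_pairs c N)) \<longleftrightarrow> is_scaled_square c N"
  using card_divisor_pairs[OF assms] by simp

lemma is_scaled_square_1_iff_4:
  assumes "even N"
  shows "is_scaled_square 1 N \<longleftrightarrow> is_scaled_square 4 N"
proof
  assume "is_scaled_square 1 N"
  then obtain t where t: "t\<^sup>2 = N" by (auto simp: is_scaled_square_def)
  with assms have "even t" by auto
  then obtain u where "t = 2 * u" ..
  with t show "is_scaled_square 4 N" by (auto simp: is_scaled_square_def power_mult_distrib)
next
  assume "is_scaled_square 4 N"
  then obtain u where "4 * u\<^sup>2 = N" by (auto simp: is_scaled_square_def)
  then have "1 * (2 * u)\<^sup>2 = N" by (simp add: power_mult_distrib)
  then show "is_scaled_square 1 N" unfolding is_scaled_square_def ..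
qed

lemma card_odd_first_divisor_pairs:
  assumes "even N"
  shows "card {(d, e) \<in> divisor_pairs 1 N. d < e \<and> odd (d + e)} = card {(d, e) \<in> divisor_pairs 1 N. odd d}"
proof -
  let ?A = "{(d, e) \<in> divisor_pairs 1 N. d < e \<and> odd (d + e)}" and ?B = "{(d, e) \<in> divisor_pairs 1 N. odd d}"
  let ?f = "\<lambda>(d, e). if odd d then (d, e) else (e, d)" and ?g = "\<lambda>(d, e). (min d e, max d e)"
  have A: "?f (d, e) \<in> ?B \<and> ?g (?f (d, e)) = (d, e)" if "(d, e) \<in> ?A" for d e
    using that by (cases "odd d") (auto simp: divisor_pairs_def mult.commute)
  have B: "?g (d, e) \<in> ?A \<and> ?f (?g (d, e)) = (d, e)" if "(d, e) \<in> ?B" for d e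
  proof -
    from that have "d * e = N" "odd d" by (simp_all add: divisor_pairs_def)
    with assms have "even e" by auto
    with \<open>odd d\<close> \<open>d * e = N\<close> show ?thesis
      by (cases "d < e") (auto simp: divisor_pairs_def mult.commute min_def max_def)
  qed
  show ?thesis
    by (rule card_pairs_eq_by_inverse[where f = ?f and g = ?g, OF A B])
qed

lemma card_even_first_divisor_pairs:
  "card {(d, e) \<in> divisor_pairs 1 N. even d} = card (divisor_pairs 2 N)"
proof (rule card_eq_by_inverse[where f = "\<lambda>(d, e). (d div 2, e)" and g = "\<lambda>(d, e). (2 * d, e)"])
  show "(\<lambda>(d, e). (d div 2, e)) ` {(d, e) \<in> divisor_pairs 1 N. even d} \<subseteq> divisor_pairs 2 N"
    by (auto simp: divisor_pairs_def)
qed (auto simp: divisor_pairs_def mult.assoc)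

lemma odd_card_mixed_parity_divisor_pairs_iff:
  assumes "0 < N" and "even N"
  shows "odd (card {(d, e) \<in> divisor_pairs 1 N. d < e \<and> odd (d + e)}) \<longleftrightarrow>
         \<not> (is_scaled_square 1 N \<longleftrightarrow> is_scaled_square 2 N)"
proof -
  let ?O = "{(d, e) \<in> divisor_pairs 1 N. odd d}" and ?E = "{(d, e) \<in> divisor_pairs 1 N. even d}"
  have "finite ?O" "finite ?E"
    using finite_divisor_pairs[OF assms(1), of 1] by (auto intro: rev_finite_subset)
  then have "card (?O \<union> ?E) = card ?O + card ?E" by (rule card_Un_disjoint) auto
  moreover have "?O \<union> ?E = divisor_pairs 1 N" by auto
  ultimately have "odd (card ?O + card (divisor_pairs 2 N)) \<longleftrightarrow> is_scaled_square 1 N"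
    using odd_card_divisor_pairs_iff[OF assms(1), of 1] card_even_first_divisor_pairs by simp
  then show ?thesis
    using odd_card_divisor_pairs_iff[OF assms(1), of 2] card_odd_first_divisor_pairs[OF assms(2)]
    by auto
qed

section \<open>Partitions with one or two distinct parts\<close>

definition omega_partitions :: "nat \<Rightarrow> nat multiset set" where
  "omega_partitions N = {M. (\<forall>k \<in># M. 0 < k) \<and> sum_mset M = N \<and> M \<noteq> {#} \<and>
                              (\<forall>k \<in># M. odd k \<longrightarrow> k < 2 * Min (set_mset M))}"

lemma member_le_sum_mset: "(k::nat) \<in># M \<Longrightarrow> k \<le> sum_mset M"
  by (metis le_add1 sum_mset.remove)

lemma size_le_sum_mset: "(\<forall>k \<in># M. (0::nat) < k) \<Longrightarrow> size M \<le> sum_mset M"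
  by (induction M) auto

lemma finite_omega_partitions: "finite (omega_partitions N)"
proof (rule finite_subset)
  show "omega_partitions N \<subseteq> (\<Union>n\<in>{..N}. multisets_of_size {..N} n)"
    by (auto simp: omega_partitions_def multisets_of_size_def member_le_sum_mset
             dest!: size_le_sum_mset)
qed auto

lemma omega_partitions_0: "omega_partitions 0 = {}"
  by (auto simp: omega_partitions_def) (metis multiset_nonemptyE)

lemma card_sets_containing_Min:
  fixes S :: "'a::linorder set"
  assumes "finite S" and "S \<noteq> {}"
  shows "card {T. T \<subseteq> S \<and> Min S \<in> T} = 2 ^ (card S - 1)"
proof -
  let ?m = "Min S"
  have "?m \<in> S" using assms by simp
  have "{T. T \<subseteq> S \<and> ?m \<in> T} = insert ?m ` Pow (S - {?m})"
  proof (intro equalityI subsetI)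
    fix T assume "T \<in> {T. T \<subseteq> S \<and> ?m \<in> T}"
    then have "T = insert ?m (T - {?m})" and "T - {?m} \<in> Pow (S - {?m})" by auto
    then show "T \<in> insert ?m ` Pow (S - {?m})" by (rule image_eqI)
  qed (use \<open>?m \<in> S\<close> in auto)
  moreover have "inj_on (insert ?m) (Pow (S - {?m}))"
    by (rule inj_on_inverseI[where g = "\<lambda>T. T - {?m}"]) auto
  ultimately show ?thesis
    using assms \<open>?m \<in> S\<close> by (simp add: card_image card_Pow)
qed

lemma pbar_omega_eq_sum: "pbar_omega N = (\<Sum>M\<in>omega_partitions N. 2 ^ (card (set_mset M) - 1))"
proof -
  let ?Ovs = "\<lambda>M. {Ov. Ov \<subseteq> set_mset M \<and> Min (set_mset M) \<in> Ov}"
  have "{(M, Ov) \<in> overpartitions N. M \<noteq> {#} \<and> Min (set_mset M) \<in> Ov \<and>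
          (\<forall>k \<in># M. odd k \<longrightarrow> k < 2 * Min (set_mset M))} = Sigma (omega_partitions N) ?Ovs"
    unfolding overpartitions_def omega_partitions_def by blast
  then have "pbar_omega N = card (Sigma (omega_partitions N) ?Ovs)"
    by (simp add: pbar_omega_def)
  also have "\<dots> = (\<Sum>M\<in>omega_partitions N. card (?Ovs M))"
    by (rule card_SigmaI) (auto simp: finite_omega_partitions)
  also have "\<dots> = (\<Sum>M\<in>omega_partitions N. 2 ^ (card (set_mset M) - 1))"
    by (rule sum.cong) (auto simp: omega_partitions_def card_sets_containing_Min)
  finally show ?thesis .
qed

lemma mset_eq_replicate_if_set_singleton:
  assumes "set_mset M = {a}"
  shows "M = replicate_mset (size M) a"
proof -
  have "M = replicate_mset (count M a) a"
    by (rule multiset_eqI) (use assms in \<open>auto simp: not_in_iff[symmetric]\<close>)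
  then show ?thesis by (metis size_replicate_mset)
qed

lemma mset_eq_replicate_if_set_doubleton:
  assumes "set_mset M = {a, b}" and "a \<noteq> b"
  shows "M = replicate_mset (count M a) a + replicate_mset (count M b) b"
  by (rule multiset_eqI) (use assms in \<open>auto simp: not_in_iff[symmetric]\<close>)

lemma card_omega_partitions_one_part:
  assumes "0 < N"
  shows "card {M \<in> omega_partitions N. card (set_mset M) = 1} = card (divisor_pairs 1 N)"
proof -
  let ?rep = "\<lambda>(d, e). replicate_mset e d" and ?Parts = "{M \<in> omega_partitions N. card (set_mset M) = 1}"
  have "bij_betw ?rep (divisor_pairs 1 N) ?Parts"
  proof (rule bij_betw_byWitness[where f' = "\<lambda>M. (Min (set_mset M), size M)"])
    show "\<forall>x \<in> divisor_pairs 1 N. (Min (set_mset (?rep x)), size (?rep x)) = x"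
      using assms by (auto simp: divisor_pairs_def)
    show "?rep ` divisor_pairs 1 N \<subseteq> ?Parts"
      using assms by (auto simp: divisor_pairs_def omega_partitions_def mult.commute)
    have "set_mset M = {Min (set_mset M)}" and "size M * Min (set_mset M) = N" if "M \<in> ?Parts" for M
    proof -
      from that obtain a where a: "set_mset M = {a}" by (auto simp: card_1_singleton_iff)
      then show "set_mset M = {Min (set_mset M)}" by simp
      have "sum_mset M = N" using that by (simp add: omega_partitions_def)
      moreover have "sum_mset M = size M * a"
        using arg_cong[OF mset_eq_replicate_if_set_singleton[OF a], of sum_mset] by simp
      ultimately show "size M * Min (set_mset M) = N" using a by simp
    qed
    then show "\<forall>M \<in> ?Parts. ?rep (Min (set_mset M), size M) = M"
      and "(\<lambda>M. (Min (set_mset M), size M)) ` ?Parts \<subseteq> divisor_pairs 1 N"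
      by (auto simp: divisor_pairs_def mult.commute intro: mset_eq_replicate_if_set_singleton[symmetric])
  qed
  then show ?thesis by (simp add: bij_betw_same_card)
qed

text \<open>\<open>(a, b, i, j)\<close> stands for the partition with \<open>i\<close> parts \<open>a\<close> and \<open>j\<close> parts \<open>b\<close>.\<close>

definition two_part_codes :: "nat \<Rightarrow> (nat \<times> nat \<times> nat \<times> nat) set" where
  "two_part_codes N = {(a, b, i, j). 0 < a \<and> a < b \<and> 0 < i \<and> 0 < j \<and> a * i + b * j = N \<and>
                                     (odd b \<longrightarrow> b < 2 * a)}"

lemma card_omega_partitions_two_parts:
  "card {M \<in> omega_partitions N. card (set_mset M) = 2} = card (two_part_codes N)"
proof -
  let ?rep = "\<lambda>(a, b, i, j). replicate_mset i a + replicate_mset j b"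
  have "{M \<in> omega_partitions N. card (set_mset M) = 2} = ?rep ` two_part_codes N"
  proof (rule set_eqI, rule iffI)
    fix M assume M: "M \<in> {M \<in> omega_partitions N. card (set_mset M) = 2}"
    then obtain a b where ab: "set_mset M = {a, b}" "a < b"
      by (auto simp: card_2_iff) (metis insert_commute linorder_neqE)
    then have M_eq: "M = replicate_mset (count M a) a + replicate_mset (count M b) b"
      by (intro mset_eq_replicate_if_set_doubleton) auto
    have "sum_mset M = count M a * a + count M b * b" by (subst M_eq) simp
    moreover have "Min (set_mset M) = a" using ab by simp
    ultimately have "(a, b, count M a, count M b) \<in> two_part_codes N"
      using M ab by (auto simp: omega_partitions_def two_part_codes_def mult.commute)
    then show "M \<in> ?rep ` two_part_codes N" using M_eq by (auto intro!: image_eqI)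
  next
    fix M assume "M \<in> ?rep ` two_part_codes N"
    then obtain a b i j where abij: "(a, b, i, j) \<in> two_part_codes N"
      and M: "M = replicate_mset i a + replicate_mset j b" by auto
    then have "set_mset M = {a, b}" and "a < b" by (auto simp: two_part_codes_def)
    then show "M \<in> {M \<in> omega_partitions N. card (set_mset M) = 2}"
      using abij M by (auto simp: omega_partitions_def two_part_codes_def mult.commute)
  qed
  moreover have "inj_on ?rep (two_part_codes N)"
  proof (rule inj_on_inverseI)
    let ?code = "\<lambda>M. (Min (set_mset M), Max (set_mset M), count M (Min (set_mset M)),
                         count M (Max (set_mset M)))"
    fix x assume "x \<in> two_part_codes N"
    then show "?code (?rep x) = x" by (auto simp: two_part_codes_def)
  qed
  ultimately show ?thesis by (simp add: card_image)
qed

lemma pbar_omega_mod4: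
  assumes "0 < N"
  shows "pbar_omega N mod 4 = (card (divisor_pairs 1 N) + 2 * card (two_part_codes N)) mod 4"
proof -
  let ?d = "\<lambda>M. card (set_mset M)"
  have "0 < ?d M" if "M \<in> omega_partitions N" for M
    using that by (auto simp: omega_partitions_def card_gt_0_iff)
  then have sets: "{M \<in> omega_partitions N. ?d M - 1 = 0} = {M \<in> omega_partitions N. ?d M = 1}"
                  "{M \<in> omega_partitions N. ?d M - 1 = 1} = {M \<in> omega_partitions N. ?d M = 2}"
    by force+
  have "pbar_omega N mod 4 =
        (card {M \<in> omega_partitions N. ?d M - 1 = 0} + 2 * card {M \<in> omega_partitions N. ?d M - 1 = 1}) mod 4"
    unfolding pbar_omega_eq_sum by (rule sum_power2_mod4[OF finite_omega_partitions])
  then show ?thesis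
    unfolding sets card_omega_partitions_one_part[OF assms] card_omega_partitions_two_parts .
qed

section \<open>Quadruples with \<open>p r + q s = N\<close>\<close>

type_synonym quad = "nat \<times> nat \<times> nat \<times> nat"

definition quads :: "nat \<Rightarrow> (nat \<Rightarrow> nat \<Rightarrow> nat \<Rightarrow> nat \<Rightarrow> bool) \<Rightarrow> quad set" where
  "quads N P = {(p, q, r, s). 0 < p \<and> 0 < q \<and> 0 < r \<and> 0 < s \<and> p * r + q * s = N \<and> P p q r s}"

lemma mem_quads [simp]:
  "(p, q, r, s) \<in> quads N P \<longleftrightarrow> 0 < p \<and> 0 < q \<and> 0 < r \<and> 0 < s \<and> p * r + q * s = N \<and> P p q r s"
  by (simp add: quads_def)

lemma finite_quads [simp]: "finite (quads N P)"
proof (rule finite_subset)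
  have "p \<le> N \<and> q \<le> N \<and> r \<le> N \<and> s \<le> N" if "(p, q, r, s) \<in> quads N P" for p q r s
  proof -
    from that have "p \<le> p * r" "r \<le> p * r" "q \<le> q * s" "s \<le> q * s" and "p * r + q * s = N"
      by simp_all
    then show ?thesis by linarith
  qed
  then show "quads N P \<subseteq> {..N} \<times> {..N} \<times> {..N} \<times> {..N}" by force
qed simp

lemma card_quads_split:
  assumes "\<And>p q r s. P p q r s \<longleftrightarrow> P1 p q r s \<or> P2 p q r s"
    and "\<And>p q r s. \<not> (P1 p q r s \<and> P2 p q r s)"
  shows "card (quads N P) = card (quads N P1) + card (quads N P2)"
proof -
  have "quads N P = quads N P1 \<union> quads N P2" and "quads N P1 \<inter> quads N P2 = {}"
    using assms by (auto simp: quads_def)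
  then show ?thesis by (simp add: card_Un_disjoint)
qed

lemma even_card_quads_iff_even_card_fixpoints:
  assumes "\<And>p q r s. (p, q, r, s) \<in> quads N P \<Longrightarrow> f (p, q, r, s) \<in> quads N P \<and> f (f (p, q, r, s)) = (p, q, r, s)"
  shows "even (card (quads N P)) \<longleftrightarrow> even (card {x \<in> quads N P. f x = x})"
  by (rule even_card_iff_even_card_fixpoints) (use assms in auto)

lemma even_card_quads_lt_even_sum_iff:
  "even (card (quads N (\<lambda>p q r s. p < q \<and> even (p + q + r)))) \<longleftrightarrow>
   even (card (quads N (\<lambda>p q r s. s = p \<and> q = p + r)))"
proof -
  let ?P = "\<lambda>p q r s. p < q \<and> even (p + q + r)" and ?f = "\<lambda>(p, q, r, s). (s, r + s, q - p, p)"
  have "even (card (quads N ?P)) \<longleftrightarrow> even (card {x \<in> quads N ?P. ?f x = x})"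
  proof (rule even_card_quads_iff_even_card_fixpoints)
    fix p q r s assume pqrs: "(p, q, r, s) \<in> quads N ?P"
    then obtain k where k: "q = p + k" "0 < k" using less_imp_add_positive by auto
    have "s * k + (r + s) * p = N" using pqrs k by (simp add: algebra_simps)
    moreover have "even (s + (r + s) + k)" using pqrs k by simp presburger
    ultimately show "?f (p, q, r, s) \<in> quads N ?P \<and> ?f (?f (p, q, r, s)) = (p, q, r, s)"
      using pqrs k by simp
  qed
  also have "{x \<in> quads N ?P. ?f x = x} = quads N (\<lambda>p q r s. s = p \<and> q = p + r)"
    by (auto simp: quads_def)
  finally show ?thesis .
qed

lemma even_card_quads_odd_sum:
  "even (card (quads N (\<lambda>p q r s. p < q \<and> r \<noteq> s \<and> odd (p + q + r + s))))"
proof -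
  let ?P = "\<lambda>p q r s. p < q \<and> r \<noteq> s \<and> odd (p + q + r + s)"
  let ?f = "\<lambda>(p, q, r, s). if r < s then (r, s, p, q) else (s, r, q, p)"
  have "even (card (quads N ?P)) \<longleftrightarrow> even (card {x \<in> quads N ?P. ?f x = x})"
  proof (rule even_card_quads_iff_even_card_fixpoints)
    fix p q r s assume pqrs: "(p, q, r, s) \<in> quads N ?P"
    show "?f (p, q, r, s) \<in> quads N ?P \<and> ?f (?f (p, q, r, s)) = (p, q, r, s)"
    proof (cases "r < s")
      case True
      then show ?thesis using pqrs by (simp add: ac_simps) argo
    next
      case False
      then have "s < r" using pqrs by simp
      then show ?thesis using pqrs by (simp add: ac_simps) argo
    qed
  qed
  also have "{x \<in> quads N ?P. ?f x = x} = {}"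
    by (auto simp: quads_def split: if_splits)
  finally show ?thesis by simp
qed

lemma card_quads_odd_diagonal:
  "card (quads N (\<lambda>p q r s. p < q \<and> r = s \<and> odd (p + q))) =
   card (quads N (\<lambda>p q r s. p = q \<and> odd r \<and> even s))"
proof (rule card_eq_by_inverse[where f = "\<lambda>(p, q, r, s). (r, r, q - p, 2 * p)"
                                  and g = "\<lambda>(p, q, r, s). (s div 2, s div 2 + r, p, p)"])
  have "(r, r, q - p, 2 * p) \<in> quads N (\<lambda>p q r s. p = q \<and> odd r \<and> even s)"
    if "(p, q, r, s) \<in> quads N (\<lambda>p q r s. p < q \<and> r = s \<and> odd (p + q))" for p q r s
  proof -
    from that obtain k where k: "q = p + k" "0 < k" using less_imp_add_positive by auto
    with that have "odd k" by (cases "even p") simp_all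
    with k that show ?thesis by (auto simp: algebra_simps)
  qed
  then show "(\<lambda>(p, q, r, s). (r, r, q - p, 2 * p)) ` quads N (\<lambda>p q r s. p < q \<and> r = s \<and> odd (p + q))
             \<subseteq> quads N (\<lambda>p q r s. p = q \<and> odd r \<and> even s)"
    by (auto simp: image_subset_iff)
  have "(s div 2, s div 2 + r, p, p) \<in> quads N (\<lambda>p q r s. p < q \<and> r = s \<and> odd (p + q))"
    if "(p, q, r, s) \<in> quads N (\<lambda>p q r s. p = q \<and> odd r \<and> even s)" for p q r s
  proof -
    from that obtain k where "s = 2 * k" "0 < k" by auto
    with that show ?thesis by (auto simp: algebra_simps)
  qed
  then show "(\<lambda>(p, q, r, s). (s div 2, s div 2 + r, p, p)) ` quads N (\<lambda>p q r s. p = q \<and> odd r \<and> even s)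
             \<subseteq> quads N (\<lambda>p q r s. p < q \<and> r = s \<and> odd (p + q))"
    by (auto simp: image_subset_iff)
qed auto

text \<open>\<open>s\<close> is even exactly when one and only one of \<open>even (p + q + r)\<close> and \<open>odd (p + q + r + s)\<close>
  holds, so the left-hand count is that of a symmetric difference.\<close>

lemma even_card_quads_lt_even_fourth_iff:
  "even (card (quads N (\<lambda>p q r s. p < q \<and> even s))) \<longleftrightarrow>
   even (card (quads N (\<lambda>p q r s. s = p \<and> q = p + r)) + card (quads N (\<lambda>p q r s. p = q \<and> odd r \<and> even s)))"
proof -
  define A where "A = card (quads N (\<lambda>p q r s. p < q \<and> even (p + q + r) \<and> even s))"
  define B where "B = card (quads N (\<lambda>p q r s. p < q \<and> odd (p + q + r) \<and> even s))"
  define C where "C = card (quads N (\<lambda>p q r s. p < q \<and> even (p + q + r) \<and> odd s))"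
  define D where "D = card (quads N (\<lambda>p q r s. p < q \<and> r \<noteq> s \<and> odd (p + q + r + s)))"
  define E where "E = card (quads N (\<lambda>p q r s. p < q \<and> r = s \<and> odd (p + q)))"
  define Fix where "Fix = card (quads N (\<lambda>p q r s. s = p \<and> q = p + r))"
  define T where "T = card (quads N (\<lambda>p q r s. p < q \<and> even s))"
  have "T = A + B"
    unfolding T_def A_def B_def by (rule card_quads_split) auto
  moreover have "even (A + C) \<longleftrightarrow> even Fix"
  proof -
    have "card (quads N (\<lambda>p q r s. p < q \<and> even (p + q + r))) = A + C"
      unfolding A_def C_def by (rule card_quads_split) auto
    then show ?thesis using even_card_quads_lt_even_sum_iff[of N] by (simp add: Fix_def)
  qed
  moreover have "even (B + C) \<longleftrightarrow> even (D + E)"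
  proof -
    have "card (quads N (\<lambda>p q r s. p < q \<and> odd (p + q + r + s))) = B + C"
      unfolding B_def C_def by (rule card_quads_split) auto
    moreover have "card (quads N (\<lambda>p q r s. p < q \<and> odd (p + q + r + s))) = D + E"
      unfolding D_def E_def by (rule card_quads_split) auto
    ultimately show ?thesis by simp
  qed
  moreover have "even D" unfolding D_def by (rule even_card_quads_odd_sum)
  ultimately have "even T \<longleftrightarrow> even (Fix + E)" by simp argo
  then show ?thesis unfolding T_def Fix_def E_def card_quads_odd_diagonal .
qed

lemma odd_card_quads_eq_even_even_iff:
  assumes "0 < N"
  shows "odd (card (quads N (\<lambda>p q r s. p = q \<and> even r \<and> even s))) \<longleftrightarrow> is_scaled_square 4 N"
proof -
  let ?P = "\<lambda>p q r s. p = q \<and> even r \<and> even s" and ?f = "\<lambda>(p, q, r, s). (p, q, s, r)"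
  have "even (card (quads N ?P)) \<longleftrightarrow> even (card {x \<in> quads N ?P. ?f x = x})"
    by (rule even_card_quads_iff_even_card_fixpoints) (auto simp: ac_simps)
  also have "card {x \<in> quads N ?P. ?f x = x} = card (divisor_pairs 4 N)"
  proof (rule card_eq_by_inverse[where f = "\<lambda>(p, q, r, s). (p, r div 2)"
                                    and g = "\<lambda>(d, e). (d, d, 2 * e, 2 * e)"])
    show "(\<lambda>(p, q, r, s). (p, r div 2)) ` {x \<in> quads N ?P. ?f x = x} \<subseteq> divisor_pairs 4 N"
      by (auto simp: divisor_pairs_def elim!: evenE)
    show "(\<lambda>(d, e). (d, d, 2 * e, 2 * e)) ` divisor_pairs 4 N \<subseteq> {x \<in> quads N ?P. ?f x = x}"
      using assms by (auto simp: divisor_pairs_def)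
  qed auto
  finally show ?thesis using odd_card_divisor_pairs_iff[OF assms, of 4] by simp
qed

definition two_square_reps :: "nat \<Rightarrow> (nat \<times> nat) set" where
  "two_square_reps N = {(p, q). 0 < p \<and> p < q \<and> p\<^sup>2 + q\<^sup>2 = N}"

lemma even_card_quads_lt_lt_iff:
  "even (card (quads N (\<lambda>p q r s. p < q \<and> r < s))) \<longleftrightarrow> even (card (two_square_reps N))"
proof -
  let ?P = "\<lambda>p q r s. p < q \<and> r < s" and ?f = "\<lambda>(p, q, r, s). (r, s, p, q)"
  have "even (card (quads N ?P)) \<longleftrightarrow> even (card {x \<in> quads N ?P. ?f x = x})"
    by (rule even_card_quads_iff_even_card_fixpoints) (auto simp: ac_simps)
  also have "card {x \<in> quads N ?P. ?f x = x} = card (two_square_reps N)"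
    by (rule card_eq_by_inverse[where f = "\<lambda>(p, q, r, s). (p, q)" and g = "\<lambda>(p, q). (p, q, p, q)"])
       (auto simp: two_square_reps_def power2_eq_square)
  finally show ?thesis .
qed

lemma card_two_part_codes:
  "card (two_part_codes N) =
   card (quads N (\<lambda>p q r s. p < q \<and> r < s)) + card (quads N (\<lambda>p q r s. p \<le> q \<and> even s))"
proof -
  let ?Small = "{(a, b, i, j) \<in> two_part_codes N. b < 2 * a}"
  let ?Large = "{(a, b, i, j) \<in> two_part_codes N. 2 * a \<le> b}"
  have "finite (two_part_codes N)"
    by (rule finite_subset[of _ "quads N (\<lambda>_ _ _ _. True)"]) (auto simp: two_part_codes_def)
  then have "card (?Small \<union> ?Large) = card ?Small + card ?Large"
    by (intro card_Un_disjoint) (auto intro: rev_finite_subset)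
  moreover have "?Small \<union> ?Large = two_part_codes N" by auto
  ultimately have "card (two_part_codes N) = card ?Small + card ?Large" by simp
  moreover have "card ?Small = card (quads N (\<lambda>p q r s. p < q \<and> r < s))"
  proof (rule card_eq_by_inverse[where f = "\<lambda>(a, b, i, j). (b - a, a, j, i + j)"
                                    and g = "\<lambda>(p, q, r, s). (q, p + q, s - r, r)"])
    have "(b - a, a, j, i + j) \<in> quads N (\<lambda>p q r s. p < q \<and> r < s)"
      if "(a, b, i, j) \<in> ?Small" for a b i j
    proof -
      from that obtain k where "b = a + k" "0 < k"
        by (auto simp: two_part_codes_def dest: less_imp_add_positive)
      with that show ?thesis by (auto simp: two_part_codes_def algebra_simps)
    qed
    then show "(\<lambda>(a, b, i, j). (b - a, a, j, i + j)) ` ?Small \<subseteq> quads N (\<lambda>p q r s. p < q \<and> r < s)"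
      by (auto simp: image_subset_iff)
    have "(q, p + q, s - r, r) \<in> ?Small" if "(p, q, r, s) \<in> quads N (\<lambda>p q r s. p < q \<and> r < s)"
      for p q r s
    proof -
      from that obtain k where "s = r + k" "0 < k" using less_imp_add_positive by auto
      with that show ?thesis by (auto simp: two_part_codes_def algebra_simps)
    qed
    then show "(\<lambda>(p, q, r, s). (q, p + q, s - r, r)) ` quads N (\<lambda>p q r s. p < q \<and> r < s) \<subseteq> ?Small"
      by (auto simp: image_subset_iff)
  qed (auto simp: two_part_codes_def)
  moreover have "card ?Large = card (quads N (\<lambda>p q r s. p \<le> q \<and> even s))"
  proof (rule card_eq_by_inverse[where f = "\<lambda>(a, b, i, j). (a, b div 2, i, 2 * j)"
                                    and g = "\<lambda>(p, q, r, s). (p, 2 * q, r, s div 2)"])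
    show "(\<lambda>(a, b, i, j). (a, b div 2, i, 2 * j)) ` ?Large \<subseteq> quads N (\<lambda>p q r s. p \<le> q \<and> even s)"
      by (auto simp: two_part_codes_def algebra_simps elim!: evenE)
    show "(\<lambda>(p, q, r, s). (p, 2 * q, r, s div 2)) ` quads N (\<lambda>p q r s. p \<le> q \<and> even s) \<subseteq> ?Large"
      by (auto simp: two_part_codes_def algebra_simps elim!: evenE)
  qed (auto simp: two_part_codes_def elim!: evenE)
  ultimately show ?thesis by simp
qed

lemma card_quads_fixed_eq_same_parity_divisor_pairs:
  assumes "0 < N"
  shows "card (quads N (\<lambda>p q r s. s = p \<and> q = p + r)) =
         card {(d, e) \<in> divisor_pairs 1 N. d < e \<and> even (d + e)}"
proof (rule card_eq_by_inverse[where f = "\<lambda>(p, q, r, s). (p, p + 2 * r)"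
                                  and g = "\<lambda>(d, e). (d, (d + e) div 2, (e - d) div 2, d)"])
  show "(\<lambda>(p, q, r, s). (p, p + 2 * r)) ` quads N (\<lambda>p q r s. s = p \<and> q = p + r)
        \<subseteq> {(d, e) \<in> divisor_pairs 1 N. d < e \<and> even (d + e)}"
    by (auto simp: divisor_pairs_def algebra_simps)
  have "(d, (d + e) div 2, (e - d) div 2, d) \<in> quads N (\<lambda>p q r s. s = p \<and> q = p + r)"
    if de: "(d, e) \<in> divisor_pairs 1 N" "d < e" "even (d + e)" for d e
  proof -
    from de have "even (e - d)" by (simp add: even_diff_nat)
    then obtain k where "e - d = 2 * k" ..
    with de have "e = d + 2 * k" "0 < k" by auto
    moreover have "0 < d" using de assms by (auto simp: divisor_pairs_def)
    ultimately show ?thesis using de by (simp add: divisor_pairs_def algebra_simps)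
  qed
  then show "(\<lambda>(d, e). (d, (d + e) div 2, (e - d) div 2, d)) `
               {(d, e) \<in> divisor_pairs 1 N. d < e \<and> even (d + e)}
             \<subseteq> quads N (\<lambda>p q r s. s = p \<and> q = p + r)"
    by (auto simp del: mem_quads)
qed (auto simp: divisor_pairs_def)

section \<open>The left-hand side modulo 4\<close>

lemma odd_card_mixed_parity_add_quads_eq_even_even_iff:
  assumes "0 < N"
  shows "odd (card {(d, e) \<in> divisor_pairs 1 N. d < e \<and> odd (d + e)} +
              card (quads N (\<lambda>p q r s. p = q \<and> even r \<and> even s))) \<longleftrightarrow> is_scaled_square 2 N"
proof (cases "even N")
  case True
  then show ?thesis
    using odd_card_mixed_parity_divisor_pairs_iff[OF assms True] odd_card_quads_eq_even_even_iff[OF assms]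
      is_scaled_square_1_iff_4[OF True]
    by auto
next
  case False
  then have mixed: "{(d, e) \<in> divisor_pairs 1 N. d < e \<and> odd (d + e)} = {}"
    and quads: "quads N (\<lambda>p q r s. p = q \<and> even r \<and> even s) = {}"
    and "\<not> is_scaled_square 2 N"
    by (auto simp: divisor_pairs_def quads_def is_scaled_square_def)
  then show ?thesis unfolding mixed quads by simp
qed

lemma even_card_two_part_codes_add_iff:
  assumes "0 < N"
  shows "even (card (two_part_codes N) + card {(d, e) \<in> divisor_pairs 1 N. d < e}) \<longleftrightarrow>
         even (card (two_square_reps N) + of_bool (is_scaled_square 2 N))"
proof -
  define W where "W = card (quads N (\<lambda>p q r s. p < q \<and> r < s))"
  define L where "L = card (quads N (\<lambda>p q r s. p < q \<and> even s))"
  define Qo where "Qo = card (quads N (\<lambda>p q r s. p = q \<and> odd r \<and> even s))"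
  define Qe where "Qe = card (quads N (\<lambda>p q r s. p = q \<and> even r \<and> even s))"
  define Ds where "Ds = card {(d, e) \<in> divisor_pairs 1 N. d < e \<and> even (d + e)}"
  define Dm where "Dm = card {(d, e) \<in> divisor_pairs 1 N. d < e \<and> odd (d + e)}"
  have "card (two_part_codes N) = W + L + (Qo + Qe)"
  proof -
    have "card (quads N (\<lambda>p q r s. p \<le> q \<and> even s)) =
          L + card (quads N (\<lambda>p q r s. p = q \<and> even s))"
      unfolding L_def by (rule card_quads_split) auto
    moreover have "card (quads N (\<lambda>p q r s. p = q \<and> even s)) = Qo + Qe"
      unfolding Qo_def Qe_def by (rule card_quads_split) auto
    ultimately show ?thesis by (simp add: card_two_part_codes W_def)
  qed
  moreover have "card {(d, e) \<in> divisor_pairs 1 N. d < e} = Ds + Dm"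
  proof -
    have "finite {(d, e) \<in> divisor_pairs 1 N. d < e \<and> even (d + e)}"
         "finite {(d, e) \<in> divisor_pairs 1 N. d < e \<and> odd (d + e)}"
      using finite_divisor_pairs[OF assms, of 1] by (auto intro: rev_finite_subset)
    then have "card ({(d, e) \<in> divisor_pairs 1 N. d < e \<and> even (d + e)} \<union>
                     {(d, e) \<in> divisor_pairs 1 N. d < e \<and> odd (d + e)}) = Ds + Dm"
      unfolding Ds_def Dm_def by (rule card_Un_disjoint) auto
    moreover have "{(d, e) \<in> divisor_pairs 1 N. d < e \<and> even (d + e)} \<union>
                   {(d, e) \<in> divisor_pairs 1 N. d < e \<and> odd (d + e)} = {(d, e) \<in> divisor_pairs 1 N. d < e}"
      by auto
    ultimately show ?thesis by simp
  qed
  moreover have "even W \<longleftrightarrow> even (card (two_square_reps N))"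
    unfolding W_def by (rule even_card_quads_lt_lt_iff)
  moreover have "even L \<longleftrightarrow> even (Ds + Qo)"
    using even_card_quads_lt_even_fourth_iff[of N] card_quads_fixed_eq_same_parity_divisor_pairs[OF assms]
    by (simp add: L_def Ds_def Qo_def)
  moreover have "odd (Dm + Qe) \<longleftrightarrow> is_scaled_square 2 N"
    unfolding Dm_def Qe_def by (rule odd_card_mixed_parity_add_quads_eq_even_even_iff[OF assms])
  ultimately show ?thesis by simp argo
qed

lemma double_mod4_eq_iff: "(2 * a) mod 4 = (2 * b) mod 4 \<longleftrightarrow> (even a \<longleftrightarrow> even (b::nat))"
  by presburger

lemma pbar_omega_mod4_eq_two_squares:
  assumes "0 < N"
  shows "pbar_omega N mod 4 =
         (of_bool (is_scaled_square 1 N) + 2 * (card (two_square_reps N) + of_bool (is_scaled_square 2 N))) mod 4"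
proof -
  let ?Dl = "card {(d, e) \<in> divisor_pairs 1 N. d < e}"
  have "pbar_omega N mod 4 = (of_bool (is_scaled_square 1 N) + 2 * (card (two_part_codes N) + ?Dl)) mod 4"
    unfolding pbar_omega_mod4[OF assms] card_divisor_pairs[OF assms zero_less_one]
    by (simp add: add_mult_distrib2 ac_simps)
  also have "\<dots> = (of_bool (is_scaled_square 1 N) + 2 * (card (two_square_reps N) + of_bool (is_scaled_square 2 N))) mod 4"
  proof (rule mod_add_cong[OF refl])
    show "(2 * (card (two_part_codes N) + ?Dl)) mod 4 =
          (2 * (card (two_square_reps N) + of_bool (is_scaled_square 2 N))) mod 4"
      unfolding double_mod4_eq_iff by (rule even_card_two_part_codes_add_iff[OF assms])
  qed
  finally show ?thesis .
qed

section \<open>The right-hand side\<close>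

definition square_pairs :: "nat \<Rightarrow> (nat \<times> nat) set" where
  "square_pairs N = {(m, n). 2 * (m\<^sup>2 + n\<^sup>2) = N}"

definition pronic_pairs :: "nat \<Rightarrow> (nat \<times> nat) set" where
  "pronic_pairs N = {(m, n). 1 + 2 * m * (m + 1) + 2 * n * (n + 1) = N}"

lemma le_double_sum_squares:
  fixes m n :: nat
  shows "m \<le> 2 * m\<^sup>2 + 2 * n\<^sup>2" and "n \<le> 2 * m\<^sup>2 + 2 * n\<^sup>2"
proof -
  have "m \<le> m * m" "n \<le> n * n" by (rule le_square)+
  then show "m \<le> 2 * m\<^sup>2 + 2 * n\<^sup>2" and "n \<le> 2 * m\<^sup>2 + 2 * n\<^sup>2"
    unfolding power2_eq_square by linarith+
qed

lemma finite_square_pairs: "finite (square_pairs N)"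
  by (rule finite_subset[of _ "{..N} \<times> {..N}"]) (auto simp: square_pairs_def le_double_sum_squares)

lemma finite_pronic_pairs: "finite (pronic_pairs N)"
  by (rule finite_subset[of _ "{..N} \<times> {..N}"]) (auto simp: pronic_pairs_def)

lemma rhs_coeff_eq:
  "rhs_coeff N = (if N = 0 then -1 else 0) + (\<Sum>(m, n)\<in>square_pairs N. (-1) ^ (m + n)) + int (card (pronic_pairs N))"
proof -
  have "{(m, n). m \<le> N \<and> n \<le> N \<and> 2 * (m\<^sup>2 + n\<^sup>2) = N} = square_pairs N"
    by (auto simp: square_pairs_def le_double_sum_squares)
  moreover have "{(m, n). m \<le> N \<and> n \<le> N \<and> 1 + 2 * m * (m + 1) + 2 * n * (n + 1) = N} = pronic_pairs N"
    by (auto simp: pronic_pairs_def)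
  ultimately show ?thesis by (simp add: rhs_coeff_def)
qed

lemma card_pronic_pairs:
  assumes "odd N"
  shows "card (pronic_pairs N) = 2 * card (two_square_reps N) + of_bool (is_scaled_square 1 N)"
proof -
  have "card (pronic_pairs N) =
        2 * card {(m, n) \<in> pronic_pairs N. m < n} + card {(m, n) \<in> pronic_pairs N. m = n}"
    using sum_swap_symmetric[OF finite_pronic_pairs, where F = "\<lambda>_. 1::nat"]
    by (simp add: pronic_pairs_def ac_simps)
  moreover have "card {(m, n) \<in> pronic_pairs N. m < n} = card (two_square_reps N)"
  proof -
    let ?A = "{(m, n) \<in> pronic_pairs N. m < n}"
    let ?f = "\<lambda>(m, n). (n - m, n + m + 1)" and ?g = "\<lambda>(p, q). ((q - p - 1) div 2, (q + p - 1) div 2)"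
    have A: "?f (m, n) \<in> two_square_reps N \<and> ?g (?f (m, n)) = (m, n)" if "(m, n) \<in> ?A" for m n
    proof -
      from that obtain k where "n = m + k" "0 < k" using less_imp_add_positive by auto
      with that show ?thesis
        by (auto simp: pronic_pairs_def two_square_reps_def power2_eq_square algebra_simps)
    qed
    have B: "?g (p, q) \<in> ?A \<and> ?f (?g (p, q)) = (p, q)" if "(p, q) \<in> two_square_reps N" for p q
    proof -
      from that assms have "p < q" and "odd (q - p)" by (auto simp: two_square_reps_def even_diff_nat)
      from \<open>odd (q - p)\<close> obtain k where "q - p = 2 * k + 1" by (rule oddE)
      with \<open>p < q\<close> have "q = p + 2 * k + 1" by simp
      with that show ?thesis
        by (auto simp: pronic_pairs_def two_square_reps_def power2_eq_square algebra_simps)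
    qed
    show ?thesis
      by (rule card_pairs_eq_by_inverse[where f = ?f and g = ?g, OF A B])
  qed
  moreover have "card {(m, n) \<in> pronic_pairs N. m = n} = card {(d, e) \<in> divisor_pairs 1 N. d = e}"
  proof -
    let ?A = "{(m, n) \<in> pronic_pairs N. m = n}" and ?B = "{(d, e) \<in> divisor_pairs 1 N. d = e}"
    let ?f = "\<lambda>(m, n). (2 * m + 1, 2 * n + 1)" and ?g = "\<lambda>(d, e). (d div 2, e div 2)"
    have A: "?f (m, n) \<in> ?B \<and> ?g (?f (m, n)) = (m, n)" if "(m, n) \<in> ?A" for m n
      using that by (auto simp: divisor_pairs_def pronic_pairs_def algebra_simps)
    have B: "?g (d, e) \<in> ?A \<and> ?f (?g (d, e)) = (d, e)" if "(d, e) \<in> ?B" for d e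
    proof -
      from that assms have "odd d" by (auto simp: divisor_pairs_def)
      then obtain k where "d = 2 * k + 1" by (rule oddE)
      with that show ?thesis by (auto simp: divisor_pairs_def pronic_pairs_def algebra_simps)
    qed
    show ?thesis
      by (rule card_pairs_eq_by_inverse[where f = ?f and g = ?g, OF A B])
  qed
  ultimately show ?thesis using card_diagonal_divisor_pairs[of 1 N] by simp
qed

lemma card_square_pairs_lt:
  assumes "0 < N" and "even N"
  shows "card {(m, n) \<in> square_pairs N. m < n} = card (two_square_reps N) + of_bool (is_scaled_square 2 N)"
proof -
  let ?Z = "{(m, n) \<in> square_pairs N. m < n \<and> m = 0}" and ?L = "{(m, n) \<in> square_pairs N. 0 < m \<and> m < n}"
  have "finite ?Z" "finite ?L" by (auto intro: finite_subset[OF _ finite_square_pairs])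
  then have "card (?Z \<union> ?L) = card ?Z + card ?L" by (rule card_Un_disjoint) auto
  moreover have "?Z \<union> ?L = {(m, n) \<in> square_pairs N. m < n}" by auto
  moreover have "card ?Z = card {(d, e) \<in> divisor_pairs 2 N. d = e}"
  proof -
    let ?B = "{(d, e) \<in> divisor_pairs 2 N. d = e}"
    let ?f = "\<lambda>(m, n). (n, n)" and ?g = "\<lambda>(d, e). (0, d)"
    have A: "?f (m, n) \<in> ?B \<and> ?g (?f (m, n)) = (m, n)" if "(m, n) \<in> ?Z" for m n
      using that by (auto simp: divisor_pairs_def square_pairs_def power2_eq_square)
    have B: "?g (d, e) \<in> ?Z \<and> ?f (?g (d, e)) = (d, e)" if "(d, e) \<in> ?B" for d e
    proof -
      from that have "2 * d * d = N" "e = d" by (auto simp: divisor_pairs_def)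
      moreover from this assms(1) have "0 < d" by (cases d) auto
      ultimately show ?thesis by (simp add: square_pairs_def power2_eq_square)
    qed
    show ?thesis
      by (rule card_pairs_eq_by_inverse[where f = ?f and g = ?g, OF A B])
  qed
  moreover have "card ?L = card (two_square_reps N)"
  proof -
    let ?f = "\<lambda>(m, n). (n - m, n + m)" and ?g = "\<lambda>(p, q). ((q - p) div 2, (q + p) div 2)"
    have A: "?f (m, n) \<in> two_square_reps N \<and> ?g (?f (m, n)) = (m, n)" if "(m, n) \<in> ?L" for m n
    proof -
      from that obtain k where "n = m + k" "0 < k" using less_imp_add_positive by auto
      with that show ?thesis
        by (auto simp: square_pairs_def two_square_reps_def power2_eq_square algebra_simps)
    qed
    have B: "?g (p, q) \<in> ?L \<and> ?f (?g (p, q)) = (p, q)" if "(p, q) \<in> two_square_reps N" for p q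
    proof -
      from that assms(2) have "p < q" and "even (q - p)" by (auto simp: two_square_reps_def even_diff_nat)
      from \<open>even (q - p)\<close> obtain k where "q - p = 2 * k" ..
      with \<open>p < q\<close> have "q = p + 2 * k" "0 < k" by auto
      with that show ?thesis
        by (auto simp: square_pairs_def two_square_reps_def power2_eq_square algebra_simps)
    qed
    show ?thesis
      by (rule card_pairs_eq_by_inverse[where f = ?f and g = ?g, OF A B])
  qed
  ultimately show ?thesis using card_diagonal_divisor_pairs[of 2 N] by simp
qed

lemma double_sum_neg_one_power_mod4:
  "(2 * (\<Sum>x\<in>A. (-1::int) ^ f x)) mod 4 = (2 * int (card A)) mod 4"
proof -
  have "2 dvd (\<Sum>x\<in>A. (-1::int) ^ f x - 1)"
  proof (rule dvd_sum)
    show "2 dvd (-1::int) ^ f x - 1" for x by (cases "even (f x)") simp_all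
  qed
  moreover have "(\<Sum>x\<in>A. (-1::int) ^ f x - 1) = (\<Sum>x\<in>A. (-1) ^ f x) - int (card A)"
    by (simp add: sum_subtractf)
  ultimately obtain k where "(\<Sum>x\<in>A. (-1::int) ^ f x) = int (card A) + 2 * k"
    by (metis dvdE add_diff_cancel_left' diff_add_cancel)
  then have "2 * (\<Sum>x\<in>A. (-1::int) ^ f x) = 2 * int (card A) + 4 * k" by simp
  then show ?thesis by simp
qed

lemma sum_square_pairs_mod4:
  assumes "0 < N" and "even N"
  shows "(\<Sum>(m, n)\<in>square_pairs N. (-1::int) ^ (m + n)) mod 4 =
         int (2 * (card (two_square_reps N) + of_bool (is_scaled_square 2 N)) + of_bool (is_scaled_square 4 N)) mod 4"
proof -
  let ?F = "\<lambda>(m, n). (-1::int) ^ (m + n)"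
  have "sum ?F (square_pairs N) =
        2 * sum ?F {(m, n) \<in> square_pairs N. m < n} + sum ?F {(m, n) \<in> square_pairs N. m = n}"
    by (rule sum_swap_symmetric[OF finite_square_pairs]) (auto simp: square_pairs_def ac_simps)
  moreover have "sum ?F {(m, n) \<in> square_pairs N. m = n} = int (of_bool (is_scaled_square 4 N))"
  proof -
    have "{(m, n) \<in> square_pairs N. m = n} = {(d, e) \<in> divisor_pairs 4 N. d = e}"
      by (auto simp: square_pairs_def divisor_pairs_def power2_eq_square)
    moreover have "sum ?F {(d, e) \<in> divisor_pairs 4 N. d = e} = int (card {(d, e) \<in> divisor_pairs 4 N. d = e})"
      by (simp add: sum.cong[OF refl, of _ ?F "\<lambda>_. 1"] split_beta)
    ultimately show ?thesis using card_diagonal_divisor_pairs[of 4 N] by simp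
  qed
  moreover have "(2 * sum ?F {(m, n) \<in> square_pairs N. m < n}) mod 4 =
                 (2 * int (card (two_square_reps N) + of_bool (is_scaled_square 2 N))) mod 4"
    using double_sum_neg_one_power_mod4[of "\<lambda>(m, n). m + n"] card_square_pairs_lt[OF assms]
    by (simp add: split_beta)
  ultimately show ?thesis by (simp add: mod_add_cong)
qed

lemma rhs_coeff_mod4:
  assumes "0 < N"
  shows "rhs_coeff N mod 4 =
         int (of_bool (is_scaled_square 1 N) + 2 * (card (two_square_reps N) + of_bool (is_scaled_square 2 N))) mod 4"
proof (cases "even N")
  case True
  then have "pronic_pairs N = {}" by (auto simp: pronic_pairs_def)
  then have "rhs_coeff N = (\<Sum>(m, n)\<in>square_pairs N. (-1) ^ (m + n))"
    using assms by (simp add: rhs_coeff_eq)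
  then show ?thesis
    using sum_square_pairs_mod4[OF assms True] is_scaled_square_1_iff_4[OF True] by (simp add: ac_simps)
next
  case False
  then have "square_pairs N = {}" and "\<not> is_scaled_square 2 N"
    by (auto simp: square_pairs_def is_scaled_square_def)
  then have "rhs_coeff N = int (card (pronic_pairs N))"
    using assms by (simp add: rhs_coeff_eq)
  then show ?thesis
    using card_pronic_pairs[OF False] \<open>\<not> is_scaled_square 2 N\<close> by (simp add: ac_simps)
qed

theorem theorem4p4:
  fixes N :: nat
  shows "int (pbar_omega N) mod 4 = rhs_coeff N mod 4"
proof (cases "N = 0")
  case True
  moreover have "square_pairs 0 = {(0, 0)}" and "pronic_pairs 0 = {}"
    by (auto simp: square_pairs_def pronic_pairs_def)
  ultimately show ?thesis by (simp add: pbar_omega_eq_sum omega_partitions_0 rhs_coeff_eq)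
next
  case False
  then have "0 < N" by simp
  have "int (pbar_omega N) mod 4 =
        int (of_bool (is_scaled_square 1 N) + 2 * (card (two_square_reps N) + of_bool (is_scaled_square 2 N))) mod 4"
    using pbar_omega_mod4_eq_two_squares[OF \<open>0 < N\<close>] by (metis zmod_int of_nat_numeral)
  also have "\<dots> = rhs_coeff N mod 4"
    using rhs_coeff_mod4[OF \<open>0 < N\<close>] by simp
  finally show ?thesis .
qed

end
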